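(* Let $0<s_1<s_2<1$, $2s_1<d<\frac{2s_1s_2}{s_2-s_1}$, assume $g$ satisfies $(G_1)$–$(G_3)$, and fix $\lambda>0$. Then there exists a constant $M>0$ such that every critical point $u\in H^{s_1,s_2}(\mathbb{R}^d)\setminus\{0\}$ of $I_\lambda$ satisfies $\|u\|\ge M$ (the constant $M$ does not depend on $u$).
   Context: For $s\in(0,1)$, $|\nabla_s u|_2^2=\int_{\mathbb{R}^d\times\mathbb{R}^d}\frac{|u(x)-u(y)|^2}{|x-y|^{d+2s}}dx\,dy$; $|\cdot|_p$ is the $L^p(\mathbb{R}^d)$ norm; $H^{s_1,s_2}(\mathbb{R}^d)=\{u\in L^2(\mathbb{R}^d):|\nabla_{s_1}u|_2<\infty,\ |\nabla_{s_2}u|_2<\infty\}$ with norm $\|u\|^2=|\nabla_{s_1}u|_2^2+|\nabla_{s_2}u|_2^2+|u|_2^2$. $g:\mathbb{R}\to\mathbb{R}$, $G(s)=\int_0^sg$, $\widetilde G(s)=\frac12g(s)s-G(s)$. $(G_1)$: $g$ continuous, odd. $(G_2)$: there exist $\alpha,\beta$ with $2+\frac{4s_2}{d}<\alpha<\beta<\frac{2d}{d-2s_1}$ and $\alpha G(s)\le g(s)s\le\beta G(s)$ for all $s$. $(G_3)$: $\widetilde G'$ exists and $\widetilde G'(s)s\ge\alpha\widetilde G(s)$ for all $s$. $I_\lambda(u)=\frac12|\nabla_{s_1}u|_2^2+\frac12|\nabla_{s_2}u|_2^2+\frac\lambda2|u|_2^2-\int_{\mathbb{R}^d}G(u)dx$.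 *)

theory Defs
  imports "HOL-Analysis.Analysis"
begin

definition gagliardo_sq :: "real \<Rightarrow> ('a::euclidean_space \<Rightarrow> real) \<Rightarrow> ennreal" where
  "gagliardo_sq s u =
     (\<integral>\<^sup>+ p. ennreal ((u (fst p) - u (snd p))\<^sup>2 / norm (fst p - snd p) powr (real DIM('a) + 2 * s))
        \<partial>(lborel \<Otimes>\<^sub>M lborel))"

definition Hspace :: "real \<Rightarrow> real \<Rightarrow> ('a::euclidean_space \<Rightarrow> real) set" where
  "Hspace s1 s2 = {u. u \<in> borel_measurable lborel \<and> integrable lborel (\<lambda>x. (u x)\<^sup>2)
                      \<and> gagliardo_sq s1 u < \<infinity> \<and> gagliardo_sq s2 u < \<infinity>}"

definition Hnorm :: "real \<Rightarrow> real \<Rightarrow> ('a::euclidean_space \<Rightarrow> real) \<Rightarrow> real" where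
  "Hnorm s1 s2 u = sqrt (enn2real (gagliardo_sq s1 u) + enn2real (gagliardo_sq s2 u)
                          + (\<integral>x. (u x)\<^sup>2 \<partial>lborel))"

text \<open>G(s) = \<integral>_0^s g (oriented).\<close>
definition Gprim :: "(real \<Rightarrow> real) \<Rightarrow> real \<Rightarrow> real" where
  "Gprim g s = (LBINT t=0..s. g t)"

definition Gtilde :: "(real \<Rightarrow> real) \<Rightarrow> real \<Rightarrow> real" where
  "Gtilde g s = g s * s / 2 - Gprim g s"

definition Ilam :: "real \<Rightarrow> real \<Rightarrow> (real \<Rightarrow> real) \<Rightarrow> real \<Rightarrow> ('a::euclidean_space \<Rightarrow> real) \<Rightarrow> real" where
  "Ilam s1 s2 g lam u = enn2real (gagliardo_sq s1 u) / 2 + enn2real (gagliardo_sq s2 u) / 2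
     + lam / 2 * (\<integral>x. (u x)\<^sup>2 \<partial>lborel) - (\<integral>x. Gprim g (u x) \<partial>lborel)"

definition critical_point :: "real \<Rightarrow> real \<Rightarrow> (real \<Rightarrow> real) \<Rightarrow> real \<Rightarrow> ('a::euclidean_space \<Rightarrow> real) \<Rightarrow> bool" where
  "critical_point s1 s2 g lam u \<longleftrightarrow> u \<in> Hspace s1 s2 \<and>
     (\<forall>\<phi>\<in>Hspace s1 s2. ((\<lambda>t. Ilam s1 s2 g lam (\<lambda>x. u x + t * \<phi> x)) has_real_derivative 0) (at 0))"

end

theory Submission
  imports Defs
begin

text \<open>
  Testing criticality of \<open>u\<close> in the direction \<open>u\<close> and using the scaling bound
  \<open>G(c v) \<le> c\<^sup>\<beta> G(v)\<close> for \<open>c \<ge> 1\<close>, which follows from (G2), gives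
  \<open>||u||\<^sub>\<lambda>\<^sup>2 \<le> \<beta> \<integral>G(u)\<close> with \<open>||u||\<^sub>\<lambda>\<^sup>2 = [u]\<^sub>s\<^sub>1\<^sup>2 + [u]\<^sub>s\<^sub>2\<^sup>2 + \<lambda>|u|\<^sub>2\<^sup>2\<close>.
  By (G2) again \<open>G(v) \<le> K (|v|\<^sup>\<alpha> + |v|\<^sup>\<beta>)\<close>, and the fractional Sobolev bound
  \<open>|u|\<^sub>r\<^sup>r \<le> A ||u||\<^sub>\<lambda>\<^sup>r\<close> for \<open>2 < r < 2d/(d - 2s\<^sub>1)\<close> turns this into
  \<open>||u||\<^sub>\<lambda>\<^sup>2 \<le> D (||u||\<^sub>\<lambda>\<^sup>\<alpha> + ||u||\<^sub>\<lambda>\<^sup>\<beta>)\<close>; as \<open>\<alpha> > 2\<close>, this bounds \<open>||u||\<^sub>\<lambda>\<close> from below.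

  The Sobolev bound is obtained by bootstrapping weak-type estimates: a weak \<open>L\<^sup>p\<close> bound and
  the Gagliardo seminorm \<open>[u]\<^sub>s\<close> give a weak \<open>L\<^sup>q\<close> bound with \<open>q = 2 + 2sp/d\<close>; starting from
  \<open>p = 2\<close> this reaches every exponent below \<open>2d/(d - 2s)\<close>, and two weak bounds interpolate to a
  strong one by the layer-cake formula.
\<close>

section \<open>Growth of the primitive\<close>

text \<open>The hypotheses \<open>\<alpha> G(s) \<le> g(s) s \<le> \<beta> G(s)\<close> form the two-sided
  Ambrosetti--Rabinowitz condition (G2), hence the prefix \<open>ar_\<close>.\<close>

lemma ar_primitive_nonneg:
  fixes G g :: "real \<Rightarrow> real"
  assumes "\<alpha> < \<beta>" and "\<alpha> * G s \<le> g s * s" and "g s * s \<le> \<beta> * G s"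
  shows "0 \<le> G s"
proof -
  have "0 \<le> (\<beta> - \<alpha>) * G s" using assms(2,3) by (simp add: algebra_simps)
  then show ?thesis using assms(1) by (simp add: zero_le_mult_iff)
qed

lemma has_real_derivative_scaled_times_powr:
  fixes G g :: "real \<Rightarrow> real"
  assumes G: "\<And>y. (G has_real_derivative g y) (at y)" and x: "0 < x"
  shows "((\<lambda>x. G (x * v) * x powr (- \<gamma>)) has_real_derivative
           x powr (- \<gamma> - 1) * (g (x * v) * (x * v) - \<gamma> * G (x * v))) (at x)"
proof -
  have "((\<lambda>x. G (x * v) * x powr (- \<gamma>)) has_real_derivative
          g (x * v) * v * x powr (- \<gamma>) + G (x * v) * (- \<gamma> * x powr (- \<gamma> - 1))) (at x)"
    using x by (auto intro!: derivative_eq_intros DERIV_chain2[OF G])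
  moreover have "x powr (- \<gamma>) = x * x powr (- \<gamma> - 1)"
    using x by (simp add: powr_mult_base)
  ultimately show ?thesis by (simp add: algebra_simps)
qed

lemma ar_scaling_upper:
  fixes G g :: "real \<Rightarrow> real"
  assumes G: "\<And>y. (G has_real_derivative g y) (at y)"
    and upper: "\<And>s. g s * s \<le> \<beta> * G s" and c: "1 \<le> c"
  shows "G (c * v) \<le> c powr \<beta> * G v"
proof -
  have mono: "G (c * v) * c powr (- \<beta>) \<le> G (1 * v) * 1 powr (- \<beta>)"
  proof (rule DERIV_nonpos_imp_nonincreasing[OF c])
    fix x :: real assume x: "1 \<le> x"
    have "((\<lambda>x. G (x * v) * x powr (- \<beta>)) has_real_derivative
            x powr (- \<beta> - 1) * (g (x * v) * (x * v) - \<beta> * G (x * v))) (at x)"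
      using x by (intro has_real_derivative_scaled_times_powr[OF G]) simp
    moreover have "x powr (- \<beta> - 1) * (g (x * v) * (x * v) - \<beta> * G (x * v)) \<le> 0"
      using upper[of "x * v"] by (intro mult_nonneg_nonpos) auto
    ultimately show "\<exists>y. ((\<lambda>x. G (x * v) * x powr (- \<beta>)) has_real_derivative y) (at x) \<and> y \<le> 0"
      by blast
  qed
  have cancel: "c powr (- \<beta>) * c powr \<beta> = 1"
    using c by (simp add: powr_add[symmetric])
  have "G (c * v) = G (c * v) * c powr (- \<beta>) * c powr \<beta>"
    by (simp add: mult.assoc cancel)
  also have "\<dots> \<le> G v * c powr \<beta>"
    using mono c by (intro mult_right_mono) auto
  finally show ?thesis by (simp add: mult.commute)
qed

lemma ar_scaling_lower:
  fixes G g :: "real \<Rightarrow> real"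
  assumes G: "\<And>y. (G has_real_derivative g y) (at y)"
    and lower: "\<And>s. \<alpha> * G s \<le> g s * s" and c: "1 \<le> c"
  shows "c powr \<alpha> * G v \<le> G (c * v)"
proof -
  have mono: "G (1 * v) * 1 powr (- \<alpha>) \<le> G (c * v) * c powr (- \<alpha>)"
  proof (rule DERIV_nonneg_imp_nondecreasing[OF c])
    fix x :: real assume x: "1 \<le> x"
    have "((\<lambda>x. G (x * v) * x powr (- \<alpha>)) has_real_derivative
            x powr (- \<alpha> - 1) * (g (x * v) * (x * v) - \<alpha> * G (x * v))) (at x)"
      using x by (intro has_real_derivative_scaled_times_powr[OF G]) simp
    moreover have "0 \<le> x powr (- \<alpha> - 1) * (g (x * v) * (x * v) - \<alpha> * G (x * v))"
      using lower[of "x * v"] by (intro mult_nonneg_nonneg) auto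
    ultimately show "\<exists>y. ((\<lambda>x. G (x * v) * x powr (- \<alpha>)) has_real_derivative y) (at x) \<and> 0 \<le> y"
      by blast
  qed
  have cancel: "c powr (- \<alpha>) * c powr \<alpha> = 1"
    using c by (simp add: powr_add[symmetric])
  have "c powr \<alpha> * G v \<le> G (c * v) * c powr (- \<alpha>) * c powr \<alpha>"
    using mono c by (simp add: mult.commute mult_left_mono)
  also have "\<dots> = G (c * v)"
    by (simp add: mult.assoc cancel)
  finally show ?thesis .
qed

lemma ar_growth_bound:
  fixes G g :: "real \<Rightarrow> real"
  assumes G: "\<And>y. (G has_real_derivative g y) (at y)"
    and "0 < \<alpha>" "\<alpha> < \<beta>"
    and lower: "\<And>s. \<alpha> * G s \<le> g s * s" and upper: "\<And>s. g s * s \<le> \<beta> * G s"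
  shows "G v \<le> max (G 1) (G (-1)) * (\<bar>v\<bar> powr \<alpha> + \<bar>v\<bar> powr \<beta>)"
proof -
  define K where "K = max (G 1) (G (-1))"
  have K: "0 \<le> K"
    unfolding K_def using ar_primitive_nonneg[OF \<open>\<alpha> < \<beta>\<close> lower upper, where s=1] by simp
  consider "v = 0" | "1 \<le> \<bar>v\<bar>" | "0 < \<bar>v\<bar>" "\<bar>v\<bar> < 1" by linarith
  then show ?thesis
  proof cases
    case 1
    then show ?thesis using lower[of 0] \<open>0 < \<alpha>\<close> by (simp add: mult_le_0_iff)
  next
    case 2
    have "G v = G (\<bar>v\<bar> * sgn v)" by (simp add: abs_mult_sgn)
    also have "\<dots> \<le> \<bar>v\<bar> powr \<beta> * G (sgn v)" by (rule ar_scaling_upper[OF G upper 2])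
    also have "\<dots> \<le> \<bar>v\<bar> powr \<beta> * K"
      using 2 by (intro mult_left_mono) (auto simp: K_def sgn_if)
    moreover have "0 \<le> \<bar>v\<bar> powr \<alpha> * K" using K by simp
    ultimately show ?thesis by (simp add: K_def algebra_simps)
  next
    case 3
    have "(1 / \<bar>v\<bar>) powr \<alpha> * G v \<le> G ((1 / \<bar>v\<bar>) * v)"
      using 3 by (intro ar_scaling_lower[OF G lower]) simp
    also have "\<dots> \<le> K" using 3 by (auto simp: K_def divide_simps split: abs_split)
    finally have "G v \<le> K * \<bar>v\<bar> powr \<alpha>"
      using 3 by (simp add: powr_divide divide_simps mult.commute)
    also have "\<dots> \<le> K * (\<bar>v\<bar> powr \<alpha> + \<bar>v\<bar> powr \<beta>)" using K by (intro mult_left_mono) auto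
    finally show ?thesis by (simp add: K_def)
  qed
qed

lemma Gprim_has_real_derivative:
  assumes "continuous_on UNIV g"
  shows "(Gprim g has_real_derivative g x) (at x)"
proof -
  define a b where "a = - \<bar>x\<bar> - 1" and "b = \<bar>x\<bar> + 1"
  have "((\<lambda>y. LBINT t=ereal 0..y. g t) has_vector_derivative g x) (at x within {a..b})"
    by (rule interval_integral_FTC2) (auto simp: a_def b_def intro: continuous_on_subset[OF assms])
  then have "((\<lambda>y. LBINT t=ereal 0..y. g t) has_vector_derivative g x) (at x within {a<..<b})"
    by (rule has_vector_derivative_within_subset) auto
  then have "((\<lambda>y. LBINT t=ereal 0..y. g t) has_vector_derivative g x) (at x)"
    by (subst (asm) at_within_open) (auto simp: a_def b_def)
  then show ?thesis
    unfolding has_real_derivative_iff_has_vector_derivative zero_ereal_def[symmetric]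
    by (simp add: Gprim_def[abs_def])
qed

lemma borel_measurable_Gprim:
  assumes "continuous_on UNIV g"
  shows "Gprim g \<in> borel_measurable borel"
  using Gprim_has_real_derivative[OF assms]
  by (intro borel_measurable_continuous_onI continuous_at_imp_continuous_on ballI DERIV_isCont)

lemma integral_Gprim_le:
  fixes u :: "'a::euclidean_space \<Rightarrow> real"
  assumes g: "continuous_on UNIV g" and "0 < \<alpha>" "\<alpha> < \<beta>"
    and lower: "\<And>s. \<alpha> * Gprim g s \<le> g s * s" and upper: "\<And>s. g s * s \<le> \<beta> * Gprim g s"
    and [measurable]: "u \<in> borel_measurable lborel"
    and int\<alpha>: "integrable lborel (\<lambda>x. \<bar>u x\<bar> powr \<alpha>)" and int\<beta>: "integrable lborel (\<lambda>x. \<bar>u x\<bar> powr \<beta>)"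
  shows "(\<integral>x. Gprim g (u x) \<partial>lborel)
    \<le> max (Gprim g 1) (Gprim g (-1)) * ((\<integral>x. \<bar>u x\<bar> powr \<alpha> \<partial>lborel) + (\<integral>x. \<bar>u x\<bar> powr \<beta> \<partial>lborel))"
proof -
  define K where "K = max (Gprim g 1) (Gprim g (-1))"
  note [measurable] = borel_measurable_Gprim[OF g]
  have nonneg: "0 \<le> Gprim g v" for v
    by (rule ar_primitive_nonneg[OF \<open>\<alpha> < \<beta>\<close> lower upper])
  have bound: "Gprim g (u x) \<le> K * (\<bar>u x\<bar> powr \<alpha> + \<bar>u x\<bar> powr \<beta>)" for x
    unfolding K_def
    by (rule ar_growth_bound[OF Gprim_has_real_derivative[OF g] \<open>0 < \<alpha>\<close> \<open>\<alpha> < \<beta>\<close> lower upper])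
  have int: "integrable lborel (\<lambda>x. K * (\<bar>u x\<bar> powr \<alpha> + \<bar>u x\<bar> powr \<beta>))"
    using int\<alpha> int\<beta> by simp
  have "integrable lborel (\<lambda>x. Gprim g (u x))"
  proof (rule Bochner_Integration.integrable_bound[OF int])
    show "AE x in lborel. norm (Gprim g (u x)) \<le> norm (K * (\<bar>u x\<bar> powr \<alpha> + \<bar>u x\<bar> powr \<beta>))"
      using bound nonneg by (auto intro!: AE_I2 order_trans[OF _ abs_ge_self])
  qed measurable
  then have "(\<integral>x. Gprim g (u x) \<partial>lborel) \<le> (\<integral>x. K * (\<bar>u x\<bar> powr \<alpha> + \<bar>u x\<bar> powr \<beta>) \<partial>lborel)"
    using int bound by (rule integral_mono)
  also have "\<dots> = K * ((\<integral>x. \<bar>u x\<bar> powr \<alpha> \<partial>lborel) + (\<integral>x. \<bar>u x\<bar> powr \<beta> \<partial>lborel))"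
    using int\<alpha> int\<beta> by simp
  finally show ?thesis by (simp add: K_def)
qed

section \<open>Weak-type bounds and the fractional Sobolev embedding\<close>

text \<open>Writing the bound as \<open>C (a/\<tau>)\<^sup>p\<close> keeps the scale \<open>a\<close> apart from the constant \<open>C\<close>,
  so that the constants produced below do not depend on \<open>u\<close>.\<close>

definition weak_Lp_bound :: "'a measure \<Rightarrow> ('a \<Rightarrow> real) \<Rightarrow> real \<Rightarrow> real \<Rightarrow> real \<Rightarrow> bool" where
  "weak_Lp_bound M u p C a \<longleftrightarrow>
     (\<forall>\<tau>>0. emeasure M {x \<in> space M. \<tau> \<le> \<bar>u x\<bar>} \<le> ennreal (C * (a / \<tau>) powr p))"

lemma ennreal_le_divide_of_mult_le:
  assumes "0 < k" "0 \<le> b" "ennreal k * x \<le> ennreal b"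
  shows "x \<le> ennreal (b / k)"
proof -
  have "x = ennreal (1 / k) * (ennreal k * x)"
    using assms(1) by (simp add: mult.assoc[symmetric] ennreal_mult[symmetric] del: ennreal_mult')
  also have "\<dots> \<le> ennreal (1 / k) * ennreal b"
    using assms(3) by (rule mult_left_mono) simp
  also have "\<dots> = ennreal (b / k)"
    using assms by (simp add: ennreal_mult[symmetric] del: ennreal_mult')
  finally show ?thesis .
qed

lemma weak_Lp_bound_of_nn_integral:
  assumes [measurable]: "u \<in> borel_measurable M" and "0 \<le> p" "0 < a" "0 \<le> C"
    and int: "(\<integral>\<^sup>+x. ennreal (\<bar>u x\<bar> powr p) \<partial>M) \<le> ennreal (C * a powr p)"
  shows "weak_Lp_bound M u p C a"
  unfolding weak_Lp_bound_def
proof (intro allI impI)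
  fix \<tau> :: real assume "0 < \<tau>"
  have "ennreal (\<tau> powr p) * emeasure M {x \<in> space M. \<tau> \<le> \<bar>u x\<bar>}
          = (\<integral>\<^sup>+x. ennreal (\<tau> powr p) * indicator {x \<in> space M. \<tau> \<le> \<bar>u x\<bar>} x \<partial>M)"
    by (rule nn_integral_cmult_indicator[symmetric]) measurable
  also have "\<dots> \<le> (\<integral>\<^sup>+x. ennreal (\<bar>u x\<bar> powr p) \<partial>M)"
    using \<open>0 < \<tau>\<close> \<open>0 \<le> p\<close>
    by (intro nn_integral_mono) (auto intro!: ennreal_leI powr_mono2 split: split_indicator)
  finally have "emeasure M {x \<in> space M. \<tau> \<le> \<bar>u x\<bar>} \<le> ennreal (C * a powr p / \<tau> powr p)"
    using int \<open>0 < \<tau>\<close> \<open>0 \<le> C\<close> by (intro ennreal_le_divide_of_mult_le) auto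
  then show "emeasure M {x \<in> space M. \<tau> \<le> \<bar>u x\<bar>} \<le> ennreal (C * (a / \<tau>) powr p)"
    using \<open>0 < a\<close> \<open>0 < \<tau>\<close> by (simp add: powr_divide)
qed

lemma emeasure_ball_diff_ge:
  fixes x :: "'a::euclidean_space"
  assumes "A \<in> sets lborel" "0 < R"
    and small: "emeasure lborel A \<le> ennreal (unit_ball_vol (real DIM('a)) * R ^ DIM('a) / 2)"
  shows "ennreal (unit_ball_vol (real DIM('a)) * R ^ DIM('a) / 2) \<le> emeasure lborel (ball x R - A)"
proof -
  define h where "h = unit_ball_vol (real DIM('a)) * R ^ DIM('a) / 2"
  have "0 \<le> h" using \<open>0 < R\<close> by (simp add: h_def)
  have "ennreal h + ennreal h = emeasure lborel (ball x R)"
    using \<open>0 < R\<close> \<open>0 \<le> h\<close> by (simp add: emeasure_ball h_def ennreal_plus[symmetric] del: ennreal_plus)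
  also have "\<dots> \<le> emeasure lborel ((ball x R - A) \<union> A)"
    using assms(1) by (intro emeasure_mono) auto
  also have "\<dots> \<le> emeasure lborel (ball x R - A) + emeasure lborel A"
    using assms(1) by (intro emeasure_subadditive) auto
  also have "\<dots> \<le> emeasure lborel (ball x R - A) + ennreal h"
    using small by (simp add: h_def add_left_mono)
  finally show ?thesis
    by (simp add: h_def[symmetric] add.commute)
qed

lemma square_div_powr_mono:
  fixes t v n R e :: real
  assumes "0 < t" "t \<le> \<bar>v\<bar>" "0 < n" "n < R" "0 \<le> e"
  shows "t\<^sup>2 / R powr e \<le> v\<^sup>2 / n powr e"
proof (rule frac_le)
  show "t\<^sup>2 \<le> v\<^sup>2" using assms(1,2) by (metis abs_le_square_iff abs_of_pos)
  show "n powr e \<le> R powr e" using assms(3-5) by (intro powr_mono2) auto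
qed (use assms(3) in auto)

text \<open>If \<open>{t \<le> |u|}\<close> fills at most half of every ball of radius \<open>R\<close>, then around each point
  with \<open>|u| \<ge> 2t\<close> half of that ball has \<open>|u| < t\<close>, and each such pair of points contributes
  at least \<open>t\<^sup>2 / R\<^sup>d\<^sup>+\<^sup>2\<^sup>s\<close> to the Gagliardo integral.\<close>

lemma gagliardo_sq_ge_superlevel:
  fixes u :: "'a::euclidean_space \<Rightarrow> real"
  assumes [measurable]: "u \<in> borel_measurable lborel" and "0 < t" "0 < R" "0 \<le> s"
    and small: "emeasure lborel {x. t \<le> \<bar>u x\<bar>} \<le> ennreal (unit_ball_vol (real DIM('a)) * R ^ DIM('a) / 2)"
  shows "ennreal (t\<^sup>2 / R powr (real DIM('a) + 2 * s) * (unit_ball_vol (real DIM('a)) * R ^ DIM('a) / 2))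
           * emeasure lborel {x. 2 * t \<le> \<bar>u x\<bar>} \<le> gagliardo_sq s u"
proof -
  define h where "h = unit_ball_vol (real DIM('a)) * R ^ DIM('a) / 2"
  define c where "c = t\<^sup>2 / R powr (real DIM('a) + 2 * s)"
  define S where "S = {p :: 'a \<times> 'a. 2 * t \<le> \<bar>u (fst p)\<bar> \<and> \<bar>u (snd p)\<bar> < t \<and> dist (fst p) (snd p) < R}"
  have "Measurable.pred (lborel \<Otimes>\<^sub>M lborel)
      (\<lambda>p :: 'a \<times> 'a. 2 * t \<le> \<bar>u (fst p)\<bar> \<and> \<bar>u (snd p)\<bar> < t \<and> dist (fst p) (snd p) < R)"
    by measurable
  then have S [measurable]: "S \<in> sets (lborel \<Otimes>\<^sub>M lborel)"
    unfolding S_def pred_def by (simp add: space_pair_measure)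
  have integrand: "ennreal c * indicator S p
      \<le> ennreal ((u (fst p) - u (snd p))\<^sup>2 / norm (fst p - snd p) powr (real DIM('a) + 2 * s))" for p
  proof (cases "p \<in> S")
    case True
    then have "c \<le> (u (fst p) - u (snd p))\<^sup>2 / norm (fst p - snd p) powr (real DIM('a) + 2 * s)"
      unfolding c_def using \<open>0 < t\<close> \<open>0 \<le> s\<close>
      by (intro square_div_powr_mono) (auto simp: S_def dist_norm)
    then show ?thesis using True by (simp add: ennreal_leI)
  qed simp
  have slice: "ennreal h * indicator {x. 2 * t \<le> \<bar>u x\<bar>} x \<le> emeasure lborel (Pair x -` S)" for x
  proof (cases "2 * t \<le> \<bar>u x\<bar>")
    case True
    then have "Pair x -` S = ball x R - {y. t \<le> \<bar>u y\<bar>}"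
      by (auto simp: S_def dist_commute)
    then show ?thesis
      using True emeasure_ball_diff_ge[of "{y. t \<le> \<bar>u y\<bar>}" R x] small \<open>0 < R\<close> by (simp add: h_def)
  qed simp
  have "ennreal (c * h) = ennreal c * ennreal h"
    using \<open>0 < R\<close> by (intro ennreal_mult) (auto simp: c_def h_def)
  then have "ennreal (c * h) * emeasure lborel {x. 2 * t \<le> \<bar>u x\<bar>}
      = ennreal c * (ennreal h * emeasure lborel {x. 2 * t \<le> \<bar>u x\<bar>})"
    by (simp only: mult.assoc)
  also have "\<dots> = ennreal c * (\<integral>\<^sup>+x. ennreal h * indicator {x. 2 * t \<le> \<bar>u x\<bar>} x \<partial>lborel)"
    by (subst nn_integral_cmult_indicator) auto
  also have "\<dots> \<le> ennreal c * emeasure (lborel \<Otimes>\<^sub>M lborel) S"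
    unfolding lborel.emeasure_pair_measure_alt[OF S] by (intro mult_left_mono nn_integral_mono slice) simp
  also have "\<dots> = (\<integral>\<^sup>+p. ennreal c * indicator S p \<partial>(lborel \<Otimes>\<^sub>M lborel))"
    by (rule nn_integral_cmult_indicator[OF S, symmetric])
  also have "\<dots> \<le> gagliardo_sq s u"
    unfolding gagliardo_sq_def by (intro nn_integral_mono integrand)
  finally show ?thesis by (simp add: c_def h_def)
qed

lemma weak_Lp_bound_gagliardo_improve:
  fixes u :: "'a::euclidean_space \<Rightarrow> real" and s :: real
  defines "\<omega> \<equiv> unit_ball_vol (real DIM('a))" and "\<theta> \<equiv> 2 * s / real DIM('a)"
  assumes [measurable]: "u \<in> borel_measurable lborel" and "0 \<le> s" "0 < a" "0 < C"
    and weak: "weak_Lp_bound lborel u p C a" and gag: "gagliardo_sq s u \<le> ennreal (a\<^sup>2)"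
  shows "weak_Lp_bound lborel u (2 + \<theta> * p) (2 powr (2 + \<theta> * p) * (2 / \<omega>) * (2 * C / \<omega>) powr \<theta>) a"
  unfolding weak_Lp_bound_def
proof (intro allI impI)
  fix \<tau> :: real assume "0 < \<tau>"
  define t where "t = \<tau> / 2"
  \<comment> \<open>\<open>R\<close> is chosen so that half a ball of radius \<open>R\<close> has the measure bound on \<open>{t \<le> |u|}\<close>.\<close>
  define X where "X = 2 * C / \<omega> * (a / t) powr p"
  define R where "R = X powr (1 / real DIM('a))"
  have "0 < \<omega>" "0 < t" by (simp_all add: \<omega>_def t_def \<open>0 < \<tau>\<close>)
  then have "0 < X" "0 < R" using \<open>0 < a\<close> \<open>0 < C\<close> by (simp_all add: X_def R_def)
  have RX: "R ^ DIM('a) = X"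
    using \<open>0 < X\<close> by (simp add: R_def powr_realpow[symmetric] powr_powr)
  have Re: "R powr (real DIM('a) + 2 * s) = X * X powr \<theta>"
    using \<open>0 < X\<close> by (simp add: R_def \<theta>_def powr_powr add_divide_distrib powr_add)
  have "emeasure lborel {x. t \<le> \<bar>u x\<bar>} \<le> ennreal (C * (a / t) powr p)"
    using weak \<open>0 < t\<close> by (simp add: weak_Lp_bound_def)
  also have "C * (a / t) powr p = unit_ball_vol (real DIM('a)) * R ^ DIM('a) / 2"
    unfolding \<omega>_def[symmetric] using \<open>0 < \<omega>\<close> by (simp add: RX X_def)
  finally have small: "emeasure lborel {x. t \<le> \<bar>u x\<bar>}
      \<le> ennreal (unit_ball_vol (real DIM('a)) * R ^ DIM('a) / 2)" .
  have "ennreal (t\<^sup>2 / R powr (real DIM('a) + 2 * s) * (unit_ball_vol (real DIM('a)) * R ^ DIM('a) / 2))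
      * emeasure lborel {x. 2 * t \<le> \<bar>u x\<bar>} \<le> gagliardo_sq s u"
    by (rule gagliardo_sq_ge_superlevel[OF _ \<open>0 < t\<close> \<open>0 < R\<close> \<open>0 \<le> s\<close> small]) simp
  also have "t\<^sup>2 / R powr (real DIM('a) + 2 * s) * (unit_ball_vol (real DIM('a)) * R ^ DIM('a) / 2)
      = \<omega> * t\<^sup>2 / (2 * X powr \<theta>)"
    unfolding Re RX \<omega>_def[symmetric] using \<open>0 < X\<close> by (simp add: field_simps)
  finally have "emeasure lborel {x. \<tau> \<le> \<bar>u x\<bar>} \<le> ennreal (a\<^sup>2 / (\<omega> * t\<^sup>2 / (2 * X powr \<theta>)))"
    using gag \<open>0 < t\<close> \<open>0 < X\<close> \<open>0 < \<omega>\<close>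
    by (intro ennreal_le_divide_of_mult_le) (auto simp: t_def)
  also have "a\<^sup>2 / (\<omega> * t\<^sup>2 / (2 * X powr \<theta>)) = 2 / \<omega> * X powr \<theta> * (a / t) powr 2"
    using \<open>0 < a\<close> \<open>0 < t\<close> \<open>0 < X\<close> \<open>0 < \<omega>\<close> by (simp add: powr_numeral field_simps power2_eq_square)
  also have "X powr \<theta> = (2 * C / \<omega>) powr \<theta> * ((a / t) powr p) powr \<theta>"
    unfolding X_def by (rule powr_mult)
  also have "((a / t) powr p) powr \<theta> = (a / t) powr (\<theta> * p)"
    by (simp add: powr_powr mult.commute)
  also have "2 / \<omega> * ((2 * C / \<omega>) powr \<theta> * (a / t) powr (\<theta> * p)) * (a / t) powr 2
      = 2 / \<omega> * (2 * C / \<omega>) powr \<theta> * (a / t) powr (2 + \<theta> * p)"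
    by (simp add: powr_add)
  also have "(a / t) powr (2 + \<theta> * p) = 2 powr (2 + \<theta> * p) * (a / \<tau>) powr (2 + \<theta> * p)"
    by (simp add: t_def powr_mult[symmetric] mult.commute)
  finally show "emeasure lborel {x \<in> space lborel. \<tau> \<le> \<bar>u x\<bar>}
      \<le> ennreal (2 powr (2 + \<theta> * p) * (2 / \<omega>) * (2 * C / \<omega>) powr \<theta> * (a / \<tau>) powr (2 + \<theta> * p))"
    by (simp add: mult_ac)
qed

lemma nn_integral_lborel_powr_Icc:
  assumes "0 \<le> a" "-1 < e" "0 \<le> K"
  shows "(\<integral>\<^sup>+\<tau>. ennreal (K * \<tau> powr e) * indicator {0..a} \<tau> \<partial>lborel) = ennreal (K * (a powr (e + 1) / (e + 1)))"
  using assms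
  by (intro nn_integral_has_integral_lebesgue' has_integral_mult_right has_integral_powr_from_0) auto

lemma nn_integral_lborel_powr_Ici:
  assumes "0 < a" "e < -1" "0 \<le> K"
  shows "(\<integral>\<^sup>+\<tau>. ennreal (K * \<tau> powr e) * indicator {a..} \<tau> \<partial>lborel) = ennreal (K * (a powr (e + 1) / - (e + 1)))"
proof -
  have "((\<lambda>\<tau>. K * \<tau> powr e) has_integral K * (- (a powr (e + 1)) / (e + 1))) {a..}"
    using assms by (intro has_integral_mult_right has_integral_powr_to_inf) auto
  then show ?thesis
    using assms by (subst nn_integral_has_integral_lebesgue') (auto simp: minus_divide_right)
qed

lemma nn_integral_powr_layer_cake:
  assumes "sigma_finite_measure M" and [measurable]: "u \<in> borel_measurable M" and "0 < r"
  shows "(\<integral>\<^sup>+x. ennreal (\<bar>u x\<bar> powr r) \<partial>M)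
    = (\<integral>\<^sup>+\<tau>. ennreal (r * \<tau> powr (r - 1)) * indicator {0..} \<tau> * emeasure M {x \<in> space M. \<tau> \<le> \<bar>u x\<bar>} \<partial>lborel)"
proof -
  interpret pair_sigma_finite M lborel
    by (intro pair_sigma_finite.intro assms(1) lborel.sigma_finite_measure_axioms)
  define f where "f x \<tau> = ennreal (r * \<tau> powr (r - 1)) * indicator {0..\<bar>u x\<bar>} \<tau>" for x \<tau>
  have [measurable]: "Measurable.pred (M \<Otimes>\<^sub>M lborel) (\<lambda>p. snd p \<in> {0..\<bar>u (fst p)\<bar>})"
    unfolding atLeastAtMost_iff by measurable
  have [measurable]: "case_prod f \<in> borel_measurable (M \<Otimes>\<^sub>M lborel)"
    unfolding f_def by measurable
  have "(\<integral>\<^sup>+x. ennreal (\<bar>u x\<bar> powr r) \<partial>M) = (\<integral>\<^sup>+x. (\<integral>\<^sup>+\<tau>. f x \<tau> \<partial>lborel) \<partial>M)"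
    using \<open>0 < r\<close> by (simp add: f_def nn_integral_lborel_powr_Icc)
  also have "\<dots> = (\<integral>\<^sup>+\<tau>. (\<integral>\<^sup>+x. f x \<tau> \<partial>M) \<partial>lborel)"
    by (rule Fubini'[symmetric]) measurable
  also have "\<dots> = (\<integral>\<^sup>+\<tau>. ennreal (r * \<tau> powr (r - 1)) * indicator {0..} \<tau>
                       * emeasure M {x \<in> space M. \<tau> \<le> \<bar>u x\<bar>} \<partial>lborel)"
  proof (rule nn_integral_cong)
    fix \<tau> :: real
    have "(\<integral>\<^sup>+x. f x \<tau> \<partial>M)
        = (\<integral>\<^sup>+x. ennreal (r * \<tau> powr (r - 1)) * indicator {0..} \<tau>
                  * indicator {x \<in> space M. \<tau> \<le> \<bar>u x\<bar>} x \<partial>M)"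
      by (intro nn_integral_cong) (auto simp: f_def split: split_indicator)
    then show "(\<integral>\<^sup>+x. f x \<tau> \<partial>M) = ennreal (r * \<tau> powr (r - 1)) * indicator {0..} \<tau>
                  * emeasure M {x \<in> space M. \<tau> \<le> \<bar>u x\<bar>}"
      by (simp add: nn_integral_cmult_indicator)
  qed
  finally show ?thesis .
qed

lemma weak_Lp_bound_layer_bound:
  assumes "weak_Lp_bound M u e C a" "0 < \<tau>" "0 < a" "0 \<le> r"
  shows "ennreal (r * \<tau> powr (r - 1)) * emeasure M {x \<in> space M. \<tau> \<le> \<bar>u x\<bar>}
    \<le> ennreal (r * C * a powr e * \<tau> powr (r - 1 - e))"
proof -
  have "ennreal (r * \<tau> powr (r - 1)) * emeasure M {x \<in> space M. \<tau> \<le> \<bar>u x\<bar>}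
      \<le> ennreal (r * \<tau> powr (r - 1)) * ennreal (C * (a / \<tau>) powr e)"
    using assms(1,2) by (intro mult_left_mono) (auto simp: weak_Lp_bound_def)
  also have "\<dots> = ennreal (r * \<tau> powr (r - 1) * (C * (a / \<tau>) powr e))"
    using \<open>0 \<le> r\<close> by (simp add: ennreal_mult')
  also have "r * \<tau> powr (r - 1) * (C * (a / \<tau>) powr e) = r * C * a powr e * \<tau> powr (r - 1 - e)"
  proof -
    have "\<tau> powr (r - 1) = \<tau> powr (r - 1 - e) * \<tau> powr e" by (simp add: powr_add[symmetric])
    then show ?thesis using \<open>0 < a\<close> \<open>0 < \<tau>\<close> by (simp add: powr_divide field_simps)
  qed
  finally show ?thesis .
qed

lemma nn_integral_powr_le_of_weak_Lp_bounds:
  assumes "sigma_finite_measure M" and [measurable]: "u \<in> borel_measurable M"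
    and "0 < a" "0 \<le> Cp" "0 \<le> Cq" "0 < r" "p < r" "r < q"
    and wp: "weak_Lp_bound M u p Cp a" and wq: "weak_Lp_bound M u q Cq a"
  shows "(\<integral>\<^sup>+x. ennreal (\<bar>u x\<bar> powr r) \<partial>M) \<le> ennreal ((r * Cp / (r - p) + r * Cq / (q - r)) * a powr r)"
proof -
  define m where "m \<tau> = emeasure M {x \<in> space M. \<tau> \<le> \<bar>u x\<bar>}" for \<tau>
  note decay = weak_Lp_bound_layer_bound[OF _ _ \<open>0 < a\<close> less_imp_le[OF \<open>0 < r\<close>]]
  have "(\<integral>\<^sup>+x. ennreal (\<bar>u x\<bar> powr r) \<partial>M)
      = (\<integral>\<^sup>+\<tau>. ennreal (r * \<tau> powr (r - 1)) * indicator {0..} \<tau> * m \<tau> \<partial>lborel)"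
    unfolding m_def using assms(1,2,6) by (rule nn_integral_powr_layer_cake)
  also have "\<dots> \<le> (\<integral>\<^sup>+\<tau>. ennreal (r * Cp * a powr p * \<tau> powr (r - 1 - p)) * indicator {0..a} \<tau>
                       + ennreal (r * Cq * a powr q * \<tau> powr (r - 1 - q)) * indicator {a..} \<tau> \<partial>lborel)"
  proof (intro nn_integral_mono)
    fix \<tau> :: real
    consider "\<tau> \<le> 0" | "0 < \<tau>" "\<tau> \<le> a" | "a < \<tau>" by linarith
    then show "ennreal (r * \<tau> powr (r - 1)) * indicator {0..} \<tau> * m \<tau>
      \<le> ennreal (r * Cp * a powr p * \<tau> powr (r - 1 - p)) * indicator {0..a} \<tau>
        + ennreal (r * Cq * a powr q * \<tau> powr (r - 1 - q)) * indicator {a..} \<tau>"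
    proof cases
      case 1
      then show ?thesis by (cases "\<tau> = 0") auto
    next
      case 2
      then show ?thesis using decay[OF wp \<open>0 < \<tau>\<close>] by (auto simp: m_def intro: add_increasing2)
    next
      case 3
      then have "0 < \<tau>" using \<open>0 < a\<close> by simp
      then show ?thesis using decay[OF wq] 3 by (auto simp: m_def intro: add_increasing)
    qed
  qed
  also have "\<dots> = ennreal (r * Cp * a powr p * (a powr (r - 1 - p + 1) / (r - 1 - p + 1)))
                + ennreal (r * Cq * a powr q * (a powr (r - 1 - q + 1) / - (r - 1 - q + 1)))"
    using assms(3-8)
    by (simp add: nn_integral_add nn_integral_lborel_powr_Icc nn_integral_lborel_powr_Ici)
  also have "\<dots> = ennreal ((r * Cp / (r - p) + r * Cq / (q - r)) * a powr r)"
    using assms(3-8) by (simp add: ennreal_plus[symmetric] powr_add[symmetric] field_simps del: ennreal_plus)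
  finally show ?thesis .
qed

definition gagliardo_weak_type :: "'a::euclidean_space itself \<Rightarrow> real \<Rightarrow> real \<Rightarrow> bool" where
  "gagliardo_weak_type T s p \<longleftrightarrow> (\<exists>C>0. \<forall>(u :: 'a \<Rightarrow> real) a.
     u \<in> borel_measurable lborel \<longrightarrow> 0 < a \<longrightarrow> (\<integral>\<^sup>+x. ennreal ((u x)\<^sup>2) \<partial>lborel) \<le> ennreal (a\<^sup>2)
       \<longrightarrow> gagliardo_sq s u \<le> ennreal (a\<^sup>2) \<longrightarrow> weak_Lp_bound lborel u p C a)"

lemma gagliardo_weak_type_2: "gagliardo_weak_type TYPE('a::euclidean_space) s 2"
  unfolding gagliardo_weak_type_def
proof (intro exI[of _ 1] conjI allI impI)
  fix u :: "'a \<Rightarrow> real" and a :: real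
  assume [measurable]: "u \<in> borel_measurable lborel" and "0 < a"
    and "(\<integral>\<^sup>+x. ennreal ((u x)\<^sup>2) \<partial>lborel) \<le> ennreal (a\<^sup>2)"
  moreover have "\<bar>v\<bar> powr 2 = v\<^sup>2" for v :: real
    by (cases "v = 0") (simp_all add: powr_numeral)
  ultimately show "weak_Lp_bound lborel u 2 1 a"
    by (intro weak_Lp_bound_of_nn_integral) (simp_all add: powr_numeral)
qed simp

lemma gagliardo_weak_type_step:
  assumes "gagliardo_weak_type TYPE('a::euclidean_space) s p" "0 \<le> s"
  shows "gagliardo_weak_type TYPE('a) s (2 + 2 * s / real DIM('a) * p)"
proof -
  define \<omega> \<theta> where "\<omega> = unit_ball_vol (real DIM('a))" and "\<theta> = 2 * s / real DIM('a)"
  obtain C where "0 < C" and weak: "\<And>(u :: 'a \<Rightarrow> real) a. u \<in> borel_measurable lborel \<Longrightarrow> 0 < a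
      \<Longrightarrow> (\<integral>\<^sup>+x. ennreal ((u x)\<^sup>2) \<partial>lborel) \<le> ennreal (a\<^sup>2) \<Longrightarrow> gagliardo_sq s u \<le> ennreal (a\<^sup>2)
      \<Longrightarrow> weak_Lp_bound lborel u p C a"
    using assms(1) unfolding gagliardo_weak_type_def by blast
  have "0 < \<omega>" by (simp add: \<omega>_def)
  then have "0 < 2 powr (2 + \<theta> * p) * (2 / \<omega>) * (2 * C / \<omega>) powr \<theta>"
    using \<open>0 < C\<close> by simp
  then show ?thesis
    unfolding gagliardo_weak_type_def \<theta>_def[symmetric]
    using weak_Lp_bound_gagliardo_improve[OF _ \<open>0 \<le> s\<close> _ \<open>0 < C\<close> weak]
    by (intro exI[of _ "2 powr (2 + \<theta> * p) * (2 / \<omega>) * (2 * C / \<omega>) powr \<theta>"]) (auto simp: \<omega>_def \<theta>_def)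
qed

lemma gagliardo_weak_type_iterate:
  assumes "0 \<le> s"
  shows "gagliardo_weak_type TYPE('a::euclidean_space) s (((\<lambda>p. 2 + 2 * s / real DIM('a) * p) ^^ n) 2)"
proof (induction n)
  case 0
  show ?case by (simp add: gagliardo_weak_type_2)
next
  case (Suc n)
  show ?case using gagliardo_weak_type_step[OF Suc.IH assms] by simp
qed

lemma affine_iterate_exceeds:
  fixes b \<theta> r x :: real
  assumes "0 \<le> \<theta>" "\<theta> < 1" "r < b / (1 - \<theta>)"
  shows "\<exists>n. r < ((\<lambda>p. b + \<theta> * p) ^^ n) x"
proof -
  define P where "P = b / (1 - \<theta>)"
  have closed_form: "((\<lambda>p. b + \<theta> * p) ^^ n) x = P - (P - x) * \<theta> ^ n" for n
  proof (induction n)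
    case (Suc n)
    have "((\<lambda>p. b + \<theta> * p) ^^ Suc n) x = b + \<theta> * ((\<lambda>p. b + \<theta> * p) ^^ n) x"
      by simp
    also have "\<dots> = b + \<theta> * (P - (P - x) * \<theta> ^ n)"
      by (simp only: Suc.IH)
    also have "\<dots> = (b + \<theta> * P) - (P - x) * \<theta> ^ Suc n"
      by (simp add: algebra_simps)
    also have "b + \<theta> * P = P"
      using \<open>\<theta> < 1\<close> by (simp add: P_def field_simps)
    finally show ?case .
  qed simp
  show ?thesis
  proof (cases "x < P")
    case True
    obtain n where "\<theta> ^ n < (P - r) / (P - x)"
      using real_arch_pow_inv[of "(P - r) / (P - x)" \<theta>] True assms(2,3) by (auto simp: P_def)
    then have "(P - x) * \<theta> ^ n < P - r" using True by (simp add: field_simps)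
    then have "r < ((\<lambda>p. b + \<theta> * p) ^^ n) x" by (simp add: closed_form)
    then show ?thesis ..
  next
    case False
    then show ?thesis using assms(3) by (intro exI[of _ 0]) (simp add: P_def)
  qed
qed

lemma gagliardo_Lp_embedding:
  assumes "0 \<le> s" "2 * s < real DIM('a::euclidean_space)"
    and "2 < r" "r < 2 * real DIM('a) / (real DIM('a) - 2 * s)"
  shows "\<exists>A\<ge>0. \<forall>(u :: 'a \<Rightarrow> real) a. u \<in> borel_measurable lborel \<longrightarrow> 0 < a
     \<longrightarrow> (\<integral>\<^sup>+x. ennreal ((u x)\<^sup>2) \<partial>lborel) \<le> ennreal (a\<^sup>2) \<longrightarrow> gagliardo_sq s u \<le> ennreal (a\<^sup>2)
     \<longrightarrow> (\<integral>\<^sup>+x. ennreal (\<bar>u x\<bar> powr r) \<partial>lborel) \<le> ennreal (A * a powr r)"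
proof -
  define \<theta> where "\<theta> = 2 * s / real DIM('a)"
  \<comment> \<open>The iterates \<open>q\<^sub>n\<^sub>+\<^sub>1 = 2 + \<theta> q\<^sub>n\<close>, \<open>q\<^sub>0 = 2\<close>, increase to \<open>2/(1 - \<theta>) = 2d/(d - 2s)\<close>.\<close>
  have "0 \<le> \<theta>" "\<theta> < 1" using assms(1,2) by (simp_all add: \<theta>_def)
  moreover have "r < 2 / (1 - \<theta>)"
    using assms(2,4) by (simp add: \<theta>_def field_simps)
  ultimately obtain n where "r < ((\<lambda>p. 2 + \<theta> * p) ^^ n) 2"
    using affine_iterate_exceeds by blast
  moreover define q where "q = ((\<lambda>p. 2 + \<theta> * p) ^^ n) 2"
  ultimately have "r < q" by simp
  obtain C2 where "0 < C2" and weak2: "\<And>(u :: 'a \<Rightarrow> real) a. u \<in> borel_measurable lborel \<Longrightarrow> 0 < a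
      \<Longrightarrow> (\<integral>\<^sup>+x. ennreal ((u x)\<^sup>2) \<partial>lborel) \<le> ennreal (a\<^sup>2) \<Longrightarrow> gagliardo_sq s u \<le> ennreal (a\<^sup>2)
      \<Longrightarrow> weak_Lp_bound lborel u 2 C2 a"
    using gagliardo_weak_type_2[of s] unfolding gagliardo_weak_type_def by blast
  obtain Cq where "0 < Cq" and weakq: "\<And>(u :: 'a \<Rightarrow> real) a. u \<in> borel_measurable lborel \<Longrightarrow> 0 < a
      \<Longrightarrow> (\<integral>\<^sup>+x. ennreal ((u x)\<^sup>2) \<partial>lborel) \<le> ennreal (a\<^sup>2) \<Longrightarrow> gagliardo_sq s u \<le> ennreal (a\<^sup>2)
      \<Longrightarrow> weak_Lp_bound lborel u q Cq a"
    using gagliardo_weak_type_iterate[OF assms(1), of n] unfolding gagliardo_weak_type_def q_def \<theta>_def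
    by blast
  show ?thesis
  proof (intro exI[of _ "r * C2 / (r - 2) + r * Cq / (q - r)"] conjI allI impI)
    show "0 \<le> r * C2 / (r - 2) + r * Cq / (q - r)"
      using \<open>2 < r\<close> \<open>r < q\<close> \<open>0 < C2\<close> \<open>0 < Cq\<close> by simp
    fix u :: "'a \<Rightarrow> real" and a :: real
    assume "u \<in> borel_measurable lborel" "0 < a" "(\<integral>\<^sup>+x. ennreal ((u x)\<^sup>2) \<partial>lborel) \<le> ennreal (a\<^sup>2)"
      "gagliardo_sq s u \<le> ennreal (a\<^sup>2)"
    then show "(\<integral>\<^sup>+x. ennreal (\<bar>u x\<bar> powr r) \<partial>lborel) \<le> ennreal ((r * C2 / (r - 2) + r * Cq / (q - r)) * a powr r)"
      using \<open>2 < r\<close> \<open>r < q\<close> \<open>0 < C2\<close> \<open>0 < Cq\<close> weak2 weakq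
      by (intro nn_integral_powr_le_of_weak_Lp_bounds lborel.sigma_finite_measure_axioms) auto
  qed
qed

lemma integrable_and_integral_le_of_nn_integral_le:
  fixes f :: "'a \<Rightarrow> real"
  assumes [measurable]: "f \<in> borel_measurable M" and "\<And>x. 0 \<le> f x"
    and le: "(\<integral>\<^sup>+x. ennreal (f x) \<partial>M) \<le> ennreal C" and "0 \<le> C"
  shows "integrable M f" and "(\<integral>x. f x \<partial>M) \<le> C"
proof -
  show "integrable M f"
    using le \<open>\<And>x. 0 \<le> f x\<close> by (intro integrableI_bounded) (auto simp: top.not_eq_extremum le_less_trans)
  then have "ennreal (\<integral>x. f x \<partial>M) = (\<integral>\<^sup>+x. ennreal (f x) \<partial>M)"
    using \<open>\<And>x. 0 \<le> f x\<close> by (intro nn_integral_eq_integral[symmetric]) auto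
  with le have "ennreal (\<integral>x. f x \<partial>M) \<le> ennreal C" by simp
  with \<open>0 \<le> C\<close> show "(\<integral>x. f x \<partial>M) \<le> C"
    using ennreal_le_iff by blast
qed

section \<open>Critical points\<close>

definition Hnorm_lam_sq :: "real \<Rightarrow> real \<Rightarrow> real \<Rightarrow> ('a::euclidean_space \<Rightarrow> real) \<Rightarrow> real" where
  "Hnorm_lam_sq s1 s2 lam u = enn2real (gagliardo_sq s1 u) + enn2real (gagliardo_sq s2 u)
     + lam * (\<integral>x. (u x)\<^sup>2 \<partial>lborel)"

lemma Hnorm_lam_sq_pos:
  assumes "u \<in> Hspace s1 s2" "0 < lam" "\<not> (AE x in lborel. u x = 0)"
  shows "0 < Hnorm_lam_sq s1 s2 lam u"
proof -
  have "integrable lborel (\<lambda>x. (u x)\<^sup>2)" using assms(1) by (simp add: Hspace_def)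
  then have "0 < (\<integral>x. (u x)\<^sup>2 \<partial>lborel)"
    using assms(3) by (simp add: integral_nonneg_eq_0_iff_AE order_less_le)
  then show ?thesis
    using assms(2) by (simp add: Hnorm_lam_sq_def add_nonneg_pos)
qed

lemma Hnorm_ge_of_Hnorm_lam_sq_ge:
  assumes "m \<le> Hnorm_lam_sq s1 s2 lam u"
  shows "sqrt (m / max 1 lam) \<le> Hnorm s1 s2 u"
proof -
  define S N where "S = enn2real (gagliardo_sq s1 u) + enn2real (gagliardo_sq s2 u)"
    and "N = (\<integral>x. (u x)\<^sup>2 \<partial>lborel)"
  have "0 \<le> S" "0 \<le> N" by (simp_all add: S_def N_def)
  have "m \<le> S + lam * N"
    using assms by (simp add: Hnorm_lam_sq_def S_def N_def)
  also have "\<dots> \<le> max 1 lam * S + max 1 lam * N"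
    using \<open>0 \<le> S\<close> \<open>0 \<le> N\<close> by (intro add_mono mult_right_mono) (auto simp: mult_le_cancel_right1)
  also have "\<dots> = max 1 lam * (Hnorm s1 s2 u)\<^sup>2"
    using \<open>0 \<le> S\<close> \<open>0 \<le> N\<close> by (simp add: Hnorm_def S_def N_def distrib_left)
  finally have "m / max 1 lam \<le> (Hnorm s1 s2 u)\<^sup>2"
    by (simp add: divide_le_eq mult.commute)
  then show ?thesis
    by (simp add: real_le_rsqrt Hnorm_def)
qed

lemma gagliardo_sq_scale:
  fixes u :: "'a::euclidean_space \<Rightarrow> real"
  assumes [measurable]: "u \<in> borel_measurable lborel"
  shows "gagliardo_sq s (\<lambda>x. c * u x) = ennreal (c\<^sup>2) * gagliardo_sq s u"
proof -
  have "ennreal ((c * u x - c * u y)\<^sup>2 / r) = ennreal (c\<^sup>2) * ennreal ((u x - u y)\<^sup>2 / r)"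
    for x y and r :: real
  proof -
    have "(c * u x - c * u y)\<^sup>2 / r = c\<^sup>2 * ((u x - u y)\<^sup>2 / r)"
      by (simp add: power2_eq_square algebra_simps)
    then show ?thesis by (simp only: ennreal_mult' zero_le_power2)
  qed
  then show ?thesis
    unfolding gagliardo_sq_def by (simp add: nn_integral_cmult)
qed

lemma Ilam_scale:
  fixes u :: "'a::euclidean_space \<Rightarrow> real"
  assumes "u \<in> borel_measurable lborel"
  shows "Ilam s1 s2 g lam (\<lambda>x. c * u x)
           = c\<^sup>2 * Hnorm_lam_sq s1 s2 lam u / 2 - (\<integral>x. Gprim g (c * u x) \<partial>lborel)"
  by (simp add: Ilam_def Hnorm_lam_sq_def gagliardo_sq_scale[OF assms] enn2real_mult
      power_mult_distrib algebra_simps)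

lemma integral_le_cmult_of_sandwich:
  fixes f h :: "'a \<Rightarrow> real"
  assumes [measurable]: "f \<in> borel_measurable M" "h \<in> borel_measurable M"
    and "\<And>x. 0 \<le> f x" "\<And>x. f x \<le> h x" "\<And>x. h x \<le> K * f x"
  shows "(\<integral>x. h x \<partial>M) \<le> K * (\<integral>x. f x \<partial>M)"
proof (cases "integrable M f")
  case True
  have "integrable M h"
  proof (rule Bochner_Integration.integrable_bound[of _ "\<lambda>x. K * f x"])
    show "AE x in M. norm (h x) \<le> norm (K * f x)"
    proof (rule AE_I2)
      fix x
      have "0 \<le> h x" using assms(3,4) order_trans by blast
      then show "norm (h x) \<le> norm (K * f x)"
        using assms(5)[of x] by simp
    qed
  qed (use True in auto)
  then have "(\<integral>x. h x \<partial>M) \<le> (\<integral>x. K * f x \<partial>M)"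
    using True assms(5) by (intro integral_mono) auto
  then show ?thesis by simp
next
  case False
  have "AE x in M. norm (f x) \<le> norm (h x)"
    using assms(3) order_trans[OF assms(4) abs_ge_self] by (auto intro!: AE_I2)
  with False have "\<not> integrable M h"
    using Bochner_Integration.integrable_bound[of M h f] by auto
  then show ?thesis using False by (simp add: not_integrable_integral_eq)
qed

lemma DERIV_le_of_eventually_right_le:
  fixes f h :: "real \<Rightarrow> real"
  assumes f: "(f has_real_derivative f') (at x)" and h: "(h has_real_derivative h') (at x)"
    and "f x = h x" and le: "eventually (\<lambda>y. f y \<le> h y) (at_right x)"
  shows "f' \<le> h'"
proof (rule ccontr)
  assume "\<not> f' \<le> h'"
  then obtain d where "0 < d" and dec: "\<And>e. 0 < e \<Longrightarrow> e < d \<Longrightarrow> h (x + e) - f (x + e) < 0"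
    using DERIV_neg_dec_right[OF DERIV_diff[OF h f]] \<open>f x = h x\<close> by fastforce
  obtain b where "x < b" and le_b: "\<And>y. x < y \<Longrightarrow> y < b \<Longrightarrow> f y \<le> h y"
    using le by (auto simp: eventually_at_right_field)
  define e where "e = min d (b - x) / 2"
  have "0 < e" "e < d" "x + e < b"
    using \<open>0 < d\<close> \<open>x < b\<close> by (auto simp: e_def min_def field_simps)
  then have "f (x + e) \<le> h (x + e)" by (intro le_b) auto
  with dec[OF \<open>0 < e\<close> \<open>e < d\<close>] show False by simp
qed

lemma integral_Gprim_scale_le:
  fixes u :: "'a::euclidean_space \<Rightarrow> real"
  assumes g: "continuous_on UNIV g" and "0 \<le> \<alpha>" "\<alpha> < \<beta>"
    and lower: "\<And>s. \<alpha> * Gprim g s \<le> g s * s" and upper: "\<And>s. g s * s \<le> \<beta> * Gprim g s"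
    and [measurable]: "u \<in> borel_measurable lborel" and "1 \<le> c"
  shows "(\<integral>x. Gprim g (c * u x) \<partial>lborel) \<le> c powr \<beta> * (\<integral>x. Gprim g (u x) \<partial>lborel)"
proof -
  note G = Gprim_has_real_derivative[OF g]
  note [measurable] = borel_measurable_Gprim[OF g]
  have nonneg: "0 \<le> Gprim g v" for v
    by (rule ar_primitive_nonneg[OF \<open>\<alpha> < \<beta>\<close> lower upper])
  show ?thesis
  proof (rule integral_le_cmult_of_sandwich)
    fix x
    have "Gprim g (u x) \<le> c powr \<alpha> * Gprim g (u x)"
      using nonneg[of "u x"] ge_one_powr_ge_zero[OF \<open>1 \<le> c\<close> \<open>0 \<le> \<alpha>\<close>]
      by (simp add: mult_le_cancel_right1)
    also have "\<dots> \<le> Gprim g (c * u x)"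
      by (rule ar_scaling_lower[OF G lower \<open>1 \<le> c\<close>])
    finally show "Gprim g (u x) \<le> Gprim g (c * u x)" .
    show "Gprim g (c * u x) \<le> c powr \<beta> * Gprim g (u x)"
      by (rule ar_scaling_upper[OF G upper \<open>1 \<le> c\<close>])
  qed (auto simp: nonneg)
qed

lemma critical_point_Hnorm_lam_sq_le:
  fixes u :: "'a::euclidean_space \<Rightarrow> real"
  assumes g: "continuous_on UNIV g" and "0 \<le> \<alpha>" "\<alpha> < \<beta>"
    and lower: "\<And>s. \<alpha> * Gprim g s \<le> g s * s" and upper: "\<And>s. g s * s \<le> \<beta> * Gprim g s"
    and crit: "critical_point s1 s2 g lam u"
  shows "Hnorm_lam_sq s1 s2 lam u \<le> \<beta> * (\<integral>x. Gprim g (u x) \<partial>lborel)"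
proof -
  have u [measurable]: "u \<in> borel_measurable lborel"
    using crit by (simp add: critical_point_def Hspace_def)
  define Q where "Q = Hnorm_lam_sq s1 s2 lam u"
  \<comment> \<open>Criticality along \<open>u\<close> gives \<open>f'(0) = Q\<close>, and (G2) gives \<open>f(t) \<le> (1 + t)\<^sup>\<beta> f(0)\<close>.\<close>
  define f where "f t = (\<integral>x. Gprim g ((1 + t) * u x) \<partial>lborel)" for t
  have "((\<lambda>t. Ilam s1 s2 g lam (\<lambda>x. u x + t * u x)) has_real_derivative 0) (at 0)"
    using crit by (simp add: critical_point_def)
  moreover have "Ilam s1 s2 g lam (\<lambda>x. u x + t * u x) = (1 + t)\<^sup>2 * Q / 2 - f t" for t
    using Ilam_scale[of u s1 s2 g lam "1 + t"] by (simp add: Q_def f_def algebra_simps)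
  ultimately have I': "((\<lambda>t. (1 + t)\<^sup>2 * Q / 2 - f t) has_real_derivative 0) (at 0)" by simp
  have "((\<lambda>t. (1 + t)\<^sup>2 * Q / 2) has_real_derivative Q) (at 0)"
    by (auto intro!: derivative_eq_intros)
  from DERIV_diff[OF this I'] have f': "(f has_real_derivative Q) (at 0)" by simp
  have h': "((\<lambda>t. (1 + t) powr \<beta> * f 0) has_real_derivative \<beta> * f 0) (at 0)"
    by (auto intro!: derivative_eq_intros)
  have "(\<integral>x. Gprim g ((1 + t) * u x) \<partial>lborel) \<le> (1 + t) powr \<beta> * (\<integral>x. Gprim g (u x) \<partial>lborel)"
    if "0 < t" for t
    using that by (intro integral_Gprim_scale_le[OF g \<open>0 \<le> \<alpha>\<close> \<open>\<alpha> < \<beta>\<close> lower upper u]) simp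
  then have "eventually (\<lambda>t. f t \<le> (1 + t) powr \<beta> * f 0) (at_right 0)"
    by (auto simp: f_def eventually_at_right_field intro: exI[of _ 1])
  with f' h' have "Q \<le> \<beta> * f 0"
    by (intro DERIV_le_of_eventually_right_le) auto
  then show ?thesis by (simp add: Q_def f_def)
qed

lemma Hspace_le_Hnorm_lam_sq:
  assumes "u \<in> Hspace s1 s2" "0 < lam"
  shows "(\<integral>\<^sup>+x. ennreal ((u x)\<^sup>2) \<partial>lborel) \<le> ennreal (max 1 (1 / lam) * Hnorm_lam_sq s1 s2 lam u)"
    and "gagliardo_sq s1 u \<le> ennreal (max 1 (1 / lam) * Hnorm_lam_sq s1 s2 lam u)"
proof -
  define Q N S1 where "Q = Hnorm_lam_sq s1 s2 lam u" and "N = (\<integral>x. (u x)\<^sup>2 \<partial>lborel)"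
    and "S1 = enn2real (gagliardo_sq s1 u)"
  have "integrable lborel (\<lambda>x. (u x)\<^sup>2)" "gagliardo_sq s1 u < \<infinity>"
    using assms(1) by (simp_all add: Hspace_def)
  then have N: "(\<integral>\<^sup>+x. ennreal ((u x)\<^sup>2) \<partial>lborel) = ennreal N" and S1: "gagliardo_sq s1 u = ennreal S1"
    by (simp_all add: N_def S1_def nn_integral_eq_integral)
  have "0 \<le> N" "0 \<le> S1" "0 \<le> enn2real (gagliardo_sq s2 u)" by (simp_all add: N_def S1_def)
  then have "lam * N \<le> Q" "S1 \<le> Q" "0 \<le> Q"
    using \<open>0 < lam\<close> by (auto simp: Q_def N_def S1_def Hnorm_lam_sq_def)
  have "N \<le> 1 / lam * Q"
    using \<open>lam * N \<le> Q\<close> \<open>0 < lam\<close> by (simp add: field_simps)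
  also have "\<dots> \<le> max 1 (1 / lam) * Q"
    using \<open>0 \<le> Q\<close> by (intro mult_right_mono) auto
  finally show "(\<integral>\<^sup>+x. ennreal ((u x)\<^sup>2) \<partial>lborel) \<le> ennreal (max 1 (1 / lam) * Q)"
    by (simp add: N ennreal_leI)
  have "S1 \<le> max 1 (1 / lam) * Q"
    using \<open>S1 \<le> Q\<close> \<open>0 \<le> Q\<close> by (simp add: order_trans[OF _ mult_le_cancel_right1[THEN iffD2]])
  then show "gagliardo_sq s1 u \<le> ennreal (max 1 (1 / lam) * Q)"
    by (simp add: S1 ennreal_leI)
qed

lemma Hspace_Lp_estimate:
  fixes s1 s2 lam r :: real
  assumes "0 \<le> s1" "2 * s1 < real DIM('a::euclidean_space)"
    and "2 < r" "r < 2 * real DIM('a) / (real DIM('a) - 2 * s1)" and "0 < lam"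
  obtains A where "\<And>u :: 'a \<Rightarrow> real. u \<in> Hspace s1 s2 \<Longrightarrow> 0 < Hnorm_lam_sq s1 s2 lam u
    \<Longrightarrow> integrable lborel (\<lambda>x. \<bar>u x\<bar> powr r)
        \<and> (\<integral>x. \<bar>u x\<bar> powr r \<partial>lborel) \<le> A * Hnorm_lam_sq s1 s2 lam u powr (r / 2)"
proof -
  obtain A where "0 \<le> A" and emb: "\<And>(u :: 'a \<Rightarrow> real) a. u \<in> borel_measurable lborel \<Longrightarrow> 0 < a
      \<Longrightarrow> (\<integral>\<^sup>+x. ennreal ((u x)\<^sup>2) \<partial>lborel) \<le> ennreal (a\<^sup>2) \<Longrightarrow> gagliardo_sq s1 u \<le> ennreal (a\<^sup>2)
      \<Longrightarrow> (\<integral>\<^sup>+x. ennreal (\<bar>u x\<bar> powr r) \<partial>lborel) \<le> ennreal (A * a powr r)"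
    using gagliardo_Lp_embedding[OF assms(1-4)] by blast
  define c where "c = max 1 (1 / lam)"
  show ?thesis
  proof (rule that[of "A * c powr (r / 2)"])
    fix u :: "'a \<Rightarrow> real"
    assume "u \<in> Hspace s1 s2" and "0 < Hnorm_lam_sq s1 s2 lam u"
    define Q a where "Q = Hnorm_lam_sq s1 s2 lam u" and "a = sqrt (c * Q)"
    have [measurable]: "u \<in> borel_measurable lborel"
      using \<open>u \<in> Hspace s1 s2\<close> by (simp add: Hspace_def)
    have "0 < Q" "0 < a" "a\<^sup>2 = c * Q"
      using \<open>0 < Hnorm_lam_sq s1 s2 lam u\<close> by (simp_all add: a_def Q_def c_def)
    then have "(\<integral>\<^sup>+x. ennreal (\<bar>u x\<bar> powr r) \<partial>lborel) \<le> ennreal (A * a powr r)"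
      using Hspace_le_Hnorm_lam_sq[OF \<open>u \<in> Hspace s1 s2\<close> \<open>0 < lam\<close>] by (intro emb) (simp_all add: Q_def c_def)
    also have "A * a powr r = A * c powr (r / 2) * Q powr (r / 2)"
      using \<open>0 < Q\<close> by (simp add: a_def c_def powr_half_sqrt[symmetric] powr_powr powr_mult)
    finally show "integrable lborel (\<lambda>x. \<bar>u x\<bar> powr r)
        \<and> (\<integral>x. \<bar>u x\<bar> powr r \<partial>lborel) \<le> A * c powr (r / 2) * Hnorm_lam_sq s1 s2 lam u powr (r / 2)"
      using integrable_and_integral_le_of_nn_integral_le[of "\<lambda>x. \<bar>u x\<bar> powr r" lborel] \<open>0 \<le> A\<close>
      by (auto simp: Q_def)
  qed
qed

lemma superlinear_lower_bound:
  fixes Q D a b :: real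
  assumes "0 < Q" "1 < a" "a < b" and le: "Q \<le> D * (Q powr a + Q powr b)"
  shows "(1 / max 1 (2 * D)) powr (1 / (a - 1)) \<le> Q"
proof (cases "1 \<le> Q")
  case True
  have "(1 / max 1 (2 * D)) powr (1 / (a - 1)) \<le> 1"
    using \<open>1 < a\<close> by (intro powr_le1) auto
  with True show ?thesis by linarith
next
  case False
  have "0 < D"
    using le \<open>0 < Q\<close> by (smt (verit) powr_gt_zero zero_less_mult_iff)
  have "Q powr b \<le> Q powr a"
    using False \<open>0 < Q\<close> \<open>a < b\<close> by (intro powr_mono') auto
  then have "D * (Q powr a + Q powr b) \<le> D * (2 * Q powr a)"
    using \<open>0 < D\<close> by (intro mult_left_mono) auto
  with le have "Q \<le> 2 * D * Q powr a" by simp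
  also have "Q powr a = Q * Q powr (a - 1)"
    using \<open>0 < Q\<close> by (simp add: powr_mult_base)
  finally have "Q * 1 \<le> Q * (2 * D * Q powr (a - 1))" by (simp add: mult_ac)
  then have "1 / (2 * D) \<le> Q powr (a - 1)"
    using \<open>0 < Q\<close> \<open>0 < D\<close> by (simp add: pos_divide_le_eq mult_ac)
  moreover have "1 / max 1 (2 * D) \<le> 1 / (2 * D)"
    using \<open>0 < D\<close> by (intro divide_left_mono) auto
  ultimately have "1 / max 1 (2 * D) \<le> Q powr (a - 1)" by linarith
  then have "(1 / max 1 (2 * D)) powr (1 / (a - 1)) \<le> (Q powr (a - 1)) powr (1 / (a - 1))"
    using \<open>1 < a\<close> by (intro powr_mono2) auto
  also have "\<dots> = Q"
    using \<open>1 < a\<close> \<open>0 < Q\<close> by (simp add: powr_powr)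
  finally show ?thesis .
qed

lemma critical_point_superlinear_bound:
  fixes s1 s2 lam :: real and g :: "real \<Rightarrow> real"
  assumes "0 \<le> s1" "2 * s1 < real DIM('a::euclidean_space)" "0 < lam"
    and g: "continuous_on UNIV g"
    and "2 < \<alpha>" "\<alpha> < \<beta>" "\<beta> < 2 * real DIM('a) / (real DIM('a) - 2 * s1)"
    and lower: "\<And>s. \<alpha> * Gprim g s \<le> g s * s" and upper: "\<And>s. g s * s \<le> \<beta> * Gprim g s"
  obtains D where "\<And>u :: 'a \<Rightarrow> real. critical_point s1 s2 g lam u \<Longrightarrow> 0 < Hnorm_lam_sq s1 s2 lam u
    \<Longrightarrow> Hnorm_lam_sq s1 s2 lam u
          \<le> D * (Hnorm_lam_sq s1 s2 lam u powr (\<alpha> / 2) + Hnorm_lam_sq s1 s2 lam u powr (\<beta> / 2))"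
proof -
  obtain A\<alpha> where A\<alpha>: "\<And>u :: 'a \<Rightarrow> real. u \<in> Hspace s1 s2 \<Longrightarrow> 0 < Hnorm_lam_sq s1 s2 lam u
      \<Longrightarrow> integrable lborel (\<lambda>x. \<bar>u x\<bar> powr \<alpha>)
          \<and> (\<integral>x. \<bar>u x\<bar> powr \<alpha> \<partial>lborel) \<le> A\<alpha> * Hnorm_lam_sq s1 s2 lam u powr (\<alpha> / 2)"
    using Hspace_Lp_estimate[OF assms(1,2) \<open>2 < \<alpha>\<close> order.strict_trans[OF assms(6,7)] \<open>0 < lam\<close>] by blast
  obtain A\<beta> where A\<beta>: "\<And>u :: 'a \<Rightarrow> real. u \<in> Hspace s1 s2 \<Longrightarrow> 0 < Hnorm_lam_sq s1 s2 lam u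
      \<Longrightarrow> integrable lborel (\<lambda>x. \<bar>u x\<bar> powr \<beta>)
          \<and> (\<integral>x. \<bar>u x\<bar> powr \<beta> \<partial>lborel) \<le> A\<beta> * Hnorm_lam_sq s1 s2 lam u powr (\<beta> / 2)"
    using Hspace_Lp_estimate[OF assms(1,2) order.strict_trans[OF assms(5,6)] assms(7) \<open>0 < lam\<close>] by blast
  define K where "K = max (Gprim g 1) (Gprim g (-1))"
  have "0 \<le> K"
    using ar_primitive_nonneg[OF \<open>\<alpha> < \<beta>\<close> lower upper, where s = 1] by (simp add: K_def)
  show ?thesis
  proof (rule that[of "\<beta> * K * max A\<alpha> A\<beta>"])
    fix u :: "'a \<Rightarrow> real"
    assume crit: "critical_point s1 s2 g lam u" and "0 < Hnorm_lam_sq s1 s2 lam u"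
    define Q where "Q = Hnorm_lam_sq s1 s2 lam u"
    have "u \<in> Hspace s1 s2" and [measurable]: "u \<in> borel_measurable lborel"
      using crit by (simp_all add: critical_point_def Hspace_def)
    note \<alpha>\<beta> = A\<alpha>[OF \<open>u \<in> Hspace s1 s2\<close> \<open>0 < Hnorm_lam_sq s1 s2 lam u\<close>]
      A\<beta>[OF \<open>u \<in> Hspace s1 s2\<close> \<open>0 < Hnorm_lam_sq s1 s2 lam u\<close>]
    have "Q \<le> \<beta> * (\<integral>x. Gprim g (u x) \<partial>lborel)"
      unfolding Q_def using \<open>2 < \<alpha>\<close> \<open>\<alpha> < \<beta>\<close>
      by (intro critical_point_Hnorm_lam_sq_le[OF g _ _ lower upper crit]) auto
    also have "\<dots> \<le> \<beta> * (K * ((\<integral>x. \<bar>u x\<bar> powr \<alpha> \<partial>lborel) + (\<integral>x. \<bar>u x\<bar> powr \<beta> \<partial>lborel)))"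
      unfolding K_def using \<open>2 < \<alpha>\<close> \<open>\<alpha> < \<beta>\<close> \<alpha>\<beta>
      by (intro mult_left_mono integral_Gprim_le[OF g _ _ lower upper]) auto
    also have "\<dots> \<le> \<beta> * (K * (A\<alpha> * Q powr (\<alpha> / 2) + A\<beta> * Q powr (\<beta> / 2)))"
      unfolding Q_def using \<open>2 < \<alpha>\<close> \<open>\<alpha> < \<beta>\<close> \<open>0 \<le> K\<close> \<alpha>\<beta>
      by (intro mult_left_mono add_mono) auto
    also have "\<dots> \<le> \<beta> * (K * (max A\<alpha> A\<beta> * Q powr (\<alpha> / 2) + max A\<alpha> A\<beta> * Q powr (\<beta> / 2)))"
      using \<open>2 < \<alpha>\<close> \<open>\<alpha> < \<beta>\<close> \<open>0 \<le> K\<close>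
      by (intro mult_left_mono add_mono mult_right_mono) auto
    finally show "Q \<le> \<beta> * K * max A\<alpha> A\<beta> * (Q powr (\<alpha> / 2) + Q powr (\<beta> / 2))"
      by (simp add: algebra_simps)
  qed
qed

theorem lemma3p8:
  fixes s1 s2 lam :: real and g :: "real \<Rightarrow> real"
  assumes "0 < s1" "s1 < s2" "s2 < 1"
    and "2 * s1 < real DIM('a::euclidean_space)"
    and "real DIM('a) < 2 * s1 * s2 / (s2 - s1)"
    and G1: "continuous_on UNIV g" "\<And>s. g (- s) = - g s"
    and G23: "\<exists>\<alpha> \<beta>. 2 + 4 * s2 / real DIM('a) < \<alpha> \<and> \<alpha> < \<beta>
               \<and> \<beta> < 2 * real DIM('a) / (real DIM('a) - 2 * s1)
               \<and> (\<forall>s. \<alpha> * Gprim g s \<le> g s * s \<and> g s * s \<le> \<beta> * Gprim g s)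
               \<and> (\<forall>s. Gtilde g differentiable (at s) \<and> deriv (Gtilde g) s * s \<ge> \<alpha> * Gtilde g s)"
    and "0 < lam"
  shows "\<exists>M>0. \<forall>u :: 'a \<Rightarrow> real. critical_point s1 s2 g lam u \<and> \<not> (AE x in lborel. u x = 0)
            \<longrightarrow> Hnorm s1 s2 u \<ge> M"
proof -
  obtain \<alpha> \<beta> where \<alpha>: "2 + 4 * s2 / real DIM('a) < \<alpha>" and "\<alpha> < \<beta>"
    and "\<beta> < 2 * real DIM('a) / (real DIM('a) - 2 * s1)"
    and lower: "\<And>s. \<alpha> * Gprim g s \<le> g s * s" and upper: "\<And>s. g s * s \<le> \<beta> * Gprim g s"
    using G23 by blast
  have "0 < 4 * s2 / real DIM('a)" using assms(1,2) by simp
  with \<alpha> have "2 < \<alpha>" by linarith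
  obtain D where D: "\<And>u :: 'a \<Rightarrow> real. critical_point s1 s2 g lam u \<Longrightarrow> 0 < Hnorm_lam_sq s1 s2 lam u
      \<Longrightarrow> Hnorm_lam_sq s1 s2 lam u
          \<le> D * (Hnorm_lam_sq s1 s2 lam u powr (\<alpha> / 2) + Hnorm_lam_sq s1 s2 lam u powr (\<beta> / 2))"
    using critical_point_superlinear_bound[OF less_imp_le[OF assms(1)] assms(4) \<open>0 < lam\<close> G1(1)
          \<open>2 < \<alpha>\<close> \<open>\<alpha> < \<beta>\<close> \<open>\<beta> < _\<close> lower upper] by blast
  define m where "m = (1 / max 1 (2 * D)) powr (1 / (\<alpha> / 2 - 1))"
  show ?thesis
  proof (intro exI[of _ "sqrt (m / max 1 lam)"] conjI allI impI)
    show "0 < sqrt (m / max 1 lam)" by (simp add: m_def)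
    fix u :: "'a \<Rightarrow> real"
    assume "critical_point s1 s2 g lam u \<and> \<not> (AE x in lborel. u x = 0)"
    then have crit: "critical_point s1 s2 g lam u" and "0 < Hnorm_lam_sq s1 s2 lam u"
      using Hnorm_lam_sq_pos[of u s1 s2 lam] \<open>0 < lam\<close> unfolding critical_point_def by blast+
    then have "m \<le> Hnorm_lam_sq s1 s2 lam u"
      unfolding m_def using \<open>2 < \<alpha>\<close> \<open>\<alpha> < \<beta>\<close>
        superlinear_lower_bound[OF _ _ _ D[OF crit]] by simp
    then show "sqrt (m / max 1 lam) \<le> Hnorm s1 s2 u"
      by (rule Hnorm_ge_of_Hnorm_lam_sq_ge)
  qed
qed

end
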